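(* For every integer $d\geq1$ and positive integer $k$, $\gamma_{gr}^{L,k}(Q_d)\leq 2^d-d+k$.
   Context: $Q_d$ is the $d$-dimensional hypercube: vertices are the $0$-$1$ strings of length $d$, adjacent iff they differ in exactly one position. For a vertex $v$, $N(v)$ is its open neighborhood and $N[v]=N(v)\cup\{v\}$. A sequence $S=(v_1,\ldots,v_m)$ of distinct vertices is a $k$-$L$-sequence if for each $i$ there is $u_i\in N[v_i]$ such that the number of indices $j<i$ with $u_i\in N(v_j)$ is less than $k$. $\gamma_{gr}^{L,k}(G)$ is the maximum length of a $k$-$L$-sequence of $G$. *)

theory Defs
  imports Main
begin

text \<open>A simple graph is given by a vertex set V and a symmetric irreflexive adjacency relation adj.\<close>

definition open_nbhd :: "'a set \<Rightarrow> ('a \<Rightarrow> 'a \<Rightarrow> bool) \<Rightarrow> 'a \<Rightarrow> 'a set" where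
  "open_nbhd V adj v = {u \<in> V. adj v u}"

definition closed_nbhd :: "'a set \<Rightarrow> ('a \<Rightarrow> 'a \<Rightarrow> bool) \<Rightarrow> 'a \<Rightarrow> 'a set" where
  "closed_nbhd V adj v = insert v (open_nbhd V adj v)"

text \<open>S = (v_1,...,v_m) as a list (0-indexed). For each i there is u in N[v_i] such that
  the number of j < i with u in N(v_j) is less than k.\<close>
definition is_k_L_sequence :: "'a set \<Rightarrow> ('a \<Rightarrow> 'a \<Rightarrow> bool) \<Rightarrow> nat \<Rightarrow> 'a list \<Rightarrow> bool" where
  "is_k_L_sequence V adj k S \<longleftrightarrow>
     distinct S \<and> set S \<subseteq> V \<and>
     (\<forall>i < length S. \<exists>u \<in> closed_nbhd V adj (S ! i).
        card {j. j < i \<and> u \<in> open_nbhd V adj (S ! j)} < k)"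

definition gamma_gr_L_k :: "'a set \<Rightarrow> ('a \<Rightarrow> 'a \<Rightarrow> bool) \<Rightarrow> nat \<Rightarrow> nat" where
  "gamma_gr_L_k V adj k = Max {length S | S. is_k_L_sequence V adj k S}"

definition hypercube_vertices :: "nat \<Rightarrow> bool list set" where
  "hypercube_vertices d = {x. length x = d}"

definition hypercube_adj :: "bool list \<Rightarrow> bool list \<Rightarrow> bool" where
  "hypercube_adj x y \<longleftrightarrow> length x = length y \<and> card {i. i < length x \<and> x ! i \<noteq> y ! i} = 1"

end

theory Submission
  imports Defs
begin

text \<open>Let \<open>v\<close> be the last vertex of a k-L-sequence and \<open>u \<in> N[v]\<close> its witness. At most \<open>k - 1\<close>
  earlier vertices are neighbours of \<open>u\<close>, so the sequence contains at most \<open>k\<close> of the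
  neighbours of \<open>u\<close> (counting \<open>v\<close> itself) and misses at least \<open>deg u - k\<close> vertices.
  In \<open>Q\<^sub>d\<close> every vertex has degree \<open>d\<close> and there are \<open>2\<^sup>d\<close> vertices.
  Neighbours of \<open>u\<close> are counted as \<open>{w. adj w u}\<close>, matching \<open>u \<in> N(v\<^sub>j)\<close>, so no symmetry of
  \<open>adj\<close> is needed.\<close>

lemma card_in_nbhd_inter_k_L_sequence:
  assumes S: "is_k_L_sequence V adj k S" and "S \<noteq> []"
  obtains u where "u \<in> V" and "card (set S \<inter> {w \<in> V. adj w u}) \<le> k"
proof -
  define i where "i = length S - 1"
  have i: "i < length S" using \<open>S \<noteq> []\<close> by (simp add: i_def)
  obtain u where u: "u \<in> closed_nbhd V adj (S ! i)"
    and card_J: "card {j. j < i \<and> u \<in> open_nbhd V adj (S ! j)} < k"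
    using S i unfolding is_k_L_sequence_def by blast
  define J where "J = {j. j < i \<and> u \<in> open_nbhd V adj (S ! j)}"
  have "u \<in> V"
    using u i S by (auto simp: closed_nbhd_def open_nbhd_def is_k_L_sequence_def)
  have "set S \<inter> {w \<in> V. adj w u} \<subseteq> insert (S ! i) ((!) S ` J)"
  proof
    fix w assume w: "w \<in> set S \<inter> {w \<in> V. adj w u}"
    then obtain j where j: "j < length S" "w = S ! j" by (auto simp: in_set_conv_nth)
    show "w \<in> insert (S ! i) ((!) S ` J)"
    proof (cases "j = i")
      case False
      then have "j \<in> J" using j w \<open>u \<in> V\<close> by (auto simp: J_def i_def open_nbhd_def)
      then show ?thesis using j by blast
    qed (use j in simp)
  qed
  then have "card (set S \<inter> {w \<in> V. adj w u}) \<le> card (insert (S ! i) ((!) S ` J))"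
    by (intro card_mono) (auto simp: J_def)
  also have "\<dots> \<le> Suc (card J)"
    using card_insert_le_m1 card_image_le[of J "(!) S"] by (fastforce simp: J_def)
  finally show ?thesis using that \<open>u \<in> V\<close> card_J J_def by simp
qed

lemma length_k_L_sequence_le_min_degree:
  assumes "finite V" and deg: "\<And>u. u \<in> V \<Longrightarrow> \<delta> \<le> card {w \<in> V. adj w u}"
    and S: "is_k_L_sequence V adj k S"
  shows "length S \<le> card V - \<delta> + k"
proof (cases "S = []")
  case False
  then obtain u where "u \<in> V" and inter: "card (set S \<inter> {w \<in> V. adj w u}) \<le> k"
    using card_in_nbhd_inter_k_L_sequence S by blast
  let ?N = "{w \<in> V. adj w u}"
  have "set S \<subseteq> V" and "distinct S" using S by (auto simp: is_k_L_sequence_def)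
  then have "length S = card (set S \<inter> ?N) + card (set S - ?N)"
    using card_Int_Diff[of "set S" ?N] by (simp add: distinct_card)
  moreover have "card (set S - ?N) \<le> card (V - ?N)"
    using \<open>set S \<subseteq> V\<close> \<open>finite V\<close> by (intro card_mono) auto
  moreover have "card (V - ?N) = card V - card ?N"
    using \<open>finite V\<close> by (intro card_Diff_subset) auto
  moreover have "card V - card ?N \<le> card V - \<delta>" using deg \<open>u \<in> V\<close> by (simp add: diff_le_mono2)
  ultimately show ?thesis using inter by linarith
qed simp

lemma gamma_gr_L_k_le:
  assumes "\<And>S. is_k_L_sequence V adj k S \<Longrightarrow> length S \<le> b"
  shows "gamma_gr_L_k V adj k \<le> b"
proof -
  let ?L = "{length S | S. is_k_L_sequence V adj k S}"
  have "is_k_L_sequence V adj k []" by (simp add: is_k_L_sequence_def)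
  then have "?L \<noteq> {}" by blast
  moreover have "finite ?L"
    using assms finite_nat_set_iff_bounded_le by blast
  ultimately show ?thesis
    unfolding gamma_gr_L_k_def using assms by (auto simp: Max_le_iff)
qed

lemma card_hypercube_vertices: "card (hypercube_vertices d) = 2 ^ d"
  and finite_hypercube_vertices: "finite (hypercube_vertices d)"
proof -
  have V: "hypercube_vertices d = {xs. set xs \<subseteq> UNIV \<and> length xs = d}"
    by (simp add: hypercube_vertices_def)
  show "card (hypercube_vertices d) = 2 ^ d" unfolding V
    by (subst card_lists_length_eq) auto
  show "finite (hypercube_vertices d)" unfolding V
    by (rule finite_lists_length_eq) simp
qed

lemma hypercube_adj_flip:
  assumes "i < length u"
  shows "hypercube_adj (u[i := \<not> u ! i]) u"
proof -
  have "{j. j < length u \<and> u[i := \<not> u ! i] ! j \<noteq> u ! j} = {i}"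
    using assms by (auto simp: nth_list_update)
  then show ?thesis by (simp add: hypercube_adj_def)
qed

lemma card_hypercube_nbhd_ge:
  assumes "u \<in> hypercube_vertices d"
  shows "d \<le> card {w \<in> hypercube_vertices d. hypercube_adj w u}"
proof -
  let ?flip = "\<lambda>i. u[i := \<not> u ! i]"
  have len: "length u = d" using assms by (simp add: hypercube_vertices_def)
  have "inj_on ?flip {..<d}"
  proof (rule inj_onI)
    fix i j assume "i \<in> {..<d}" "?flip i = ?flip j"
    then have "?flip i ! i = ?flip j ! i" by simp
    then show "i = j" using \<open>i \<in> {..<d}\<close> len by (cases "i = j") (auto simp: nth_list_update)
  qed
  moreover have "?flip ` {..<d} \<subseteq> {w \<in> hypercube_vertices d. hypercube_adj w u}"
    using len hypercube_adj_flip by (auto simp: hypercube_vertices_def)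
  ultimately show ?thesis
    using card_inj_on_le[of ?flip "{..<d}"] finite_hypercube_vertices by fastforce
qed

theorem mainTheorem12:
  fixes d k :: nat
  assumes "d \<ge> 1" and "k \<ge> 1"
  shows "gamma_gr_L_k (hypercube_vertices d) hypercube_adj k \<le> 2 ^ d - d + k"
  using length_k_L_sequence_le_min_degree[OF finite_hypercube_vertices card_hypercube_nbhd_ge]
  by (intro gamma_gr_L_k_le) (simp add: card_hypercube_vertices)

end
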